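(* Let $N\ge1$ be an integer and $f\in L^2(\pi)$. Then $\langle f,P_Nf\rangle_\pi=\frac1N\int_{W_N}\frac{\big(\sum_{i=1}^Nw(z_i)f(z_i)\big)^2}{\sum_{j=1}^Nw(z_j)}\prod_{n=1}^Nq(dz_n)\ge0$, and $\langle f,P_Nf\rangle_\pi=0$ if and only if $\|f\|_\pi=0$.
   Context: Let $\pi,q$ be probability densities with respect to a $\sigma$-finite measure $\mu$ on $(\mathbb{X},\mathcal{X})$ with $q>0$ wherever $\pi>0$; $\pi(dx)=\pi(x)\mu(dx)$, $q(dx)=q(x)\mu(dx)$, $\mathbb{S}=\{\pi>0\}$, $w=\pi/q$ on $\mathbb{S}$ and $0$ elsewhere. $W_N=\{z\in\mathbb{X}^N:\sum_{i=1}^Nw(z_i)>0\}$. For $z_1\in\mathbb{S}$, $P_N(z_1,A)=\int_{\mathbb{X}^{N-1}}\sum_{i=1}^N\frac{w(z_i)}{\sum_{j=1}^Nw(z_j)}\mathbf 1\{z_i\in A\}\prod_{n=2}^Nq(dz_n)$, $P_1(z,\cdot)=\delta_z$, $P_Nf(x)=\int f(y)P_N(x,dy)$; $\langle g,h\rangle_\pi=\int gh\,d\pi$, $\|g\|_\pi^2=\langle g,g\rangle_\pi$. *)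

theory Defs
  imports "HOL-Probability.Probability"
begin

definition wt :: "('a \<Rightarrow> real) \<Rightarrow> ('a \<Rightarrow> real) \<Rightarrow> 'a \<Rightarrow> real" where
  "wt p q x = (if p x > 0 then p x / q x else 0)"

text \<open>Indices 1..N of the paper are rendered as 0..N-1; coordinate 0 is the current state z_1.
  W_N = {z : sum_i w(z_i) > 0}.\<close>
definition WN :: "'a measure \<Rightarrow> ('a \<Rightarrow> real) \<Rightarrow> ('a \<Rightarrow> real) \<Rightarrow> nat \<Rightarrow> (nat \<Rightarrow> 'a) set" where
  "WN M p q N = {z \<in> space (PiM {..<N} (\<lambda>_. M)). (\<Sum>j<N. wt p q (z j)) > 0}"

definition PN :: "'a measure \<Rightarrow> ('a \<Rightarrow> real) \<Rightarrow> ('a \<Rightarrow> real) \<Rightarrow> nat \<Rightarrow> ('a \<Rightarrow> real) \<Rightarrow> 'a \<Rightarrow> real" where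
  "PN M p q N f x =
     (if N = 1 then f x else
      (\<integral>z'. (let z = z'(0 := x) in
               (\<Sum>i<N. wt p q (z i) / (\<Sum>j<N. wt p q (z j)) * f (z i)))
        \<partial>PiM {1..<N} (\<lambda>_. density M q)))"

definition inner_pi :: "'a measure \<Rightarrow> ('a \<Rightarrow> real) \<Rightarrow> ('a \<Rightarrow> real) \<Rightarrow> ('a \<Rightarrow> real) \<Rightarrow> real" where
  "inner_pi M p g h = (\<integral>x. g x * h x \<partial>density M p)"

end

theory Submission
  imports Defs
begin

(* Write Q = q mu, so that pi = w Q, and put G z = (SUM i. w (z i) * f (z i)) and
   S z = (SUM i. w (z i)) for z distributed as Q^N. Integrating out the fresh proposals
   z 2, ..., z N turns <f, P_N f>_pi into the Q^N-integral of w (z 1) f (z 1) G / S.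
   Since Q^N is exchangeable, each of the N terms w (z k) f (z k) G / S has the same
   integral, and together they sum to G^2 / S; each term is integrable, being dominated
   by a sum of values of w f^2 at single coordinates. If the integral of G^2 / S vanishes,
   then G = 0 almost surely; the product sets {w f > 0}^N and {w f < 0}^N lie in {G <> 0},
   so they are null, hence so are {w f > 0} and {w f < 0}, i.e. ||f||_pi = 0. *)

lemma borel_measurable_wt[measurable]:
  assumes [measurable]: "p \<in> borel_measurable M" "q \<in> borel_measurable M"
  shows "wt p q \<in> borel_measurable M"
  unfolding wt_def[abs_def] by measurable

lemma prob_space_density:
  assumes "q \<in> borel_measurable M" "(\<integral>\<^sup>+ x. ennreal (q x) \<partial>M) = 1"
  shows "prob_space (density M q)"
proof (rule prob_spaceI)
  have "emeasure (density M q) (space M) = (\<integral>\<^sup>+ x. ennreal (q x) * indicator (space M) x \<partial>M)"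
    using assms(1) by (simp add: emeasure_density)
  also have "\<dots> = (\<integral>\<^sup>+ x. ennreal (q x) \<partial>M)"
    by (intro nn_integral_cong) simp
  finally show "emeasure (density M q) (space (density M q)) = 1"
    using assms(2) by simp
qed

lemma integrable_PiM_component:
  fixes \<phi> :: "'a \<Rightarrow> real"
  assumes "prob_space M" "i \<in> I" "integrable M \<phi>"
  shows "integrable (PiM I (\<lambda>_. M)) (\<lambda>z. \<phi> (z i))"
proof -
  have "(\<lambda>z. z i) \<in> PiM I (\<lambda>_. M) \<rightarrow>\<^sub>M M"
    using assms(2) by (rule measurable_component_singleton)
  moreover have "distr (PiM I (\<lambda>_. M)) M (\<lambda>z. z i) = M"
    using distr_PiM_component[of I "\<lambda>_. M" i] assms(1,2) by simp
  ultimately show ?thesis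
    using integrable_distr_eq[of "\<lambda>z. z i" "PiM I (\<lambda>_. M)" M \<phi>] assms(3) by simp
qed

lemma integral_PiM_component:
  fixes \<phi> :: "'a \<Rightarrow> real"
  assumes "prob_space M" "i \<in> I" "\<phi> \<in> borel_measurable M"
  shows "(\<integral>z. \<phi> (z i) \<partial>PiM I (\<lambda>_. M)) = integral\<^sup>L M \<phi>"
proof -
  have "(\<lambda>z. z i) \<in> PiM I (\<lambda>_. M) \<rightarrow>\<^sub>M M"
    using assms(2) by (rule measurable_component_singleton)
  moreover have "distr (PiM I (\<lambda>_. M)) M (\<lambda>z. z i) = M"
    using distr_PiM_component[of I "\<lambda>_. M" i] assms(1,2) by simp
  ultimately show ?thesis
    using integral_distr[of "\<lambda>z. z i" "PiM I (\<lambda>_. M)" M \<phi>] assms(3) by simp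
qed

lemma integral_PiM_permute:
  fixes g :: "('i \<Rightarrow> 'a) \<Rightarrow> real"
  assumes "prob_space M" "t permutes I" and [measurable]: "g \<in> borel_measurable (PiM I (\<lambda>_. M))"
  shows "(\<integral>\<omega>. g (\<lambda>n\<in>I. \<omega> (t n)) \<partial>PiM I (\<lambda>_. M)) = integral\<^sup>L (PiM I (\<lambda>_. M)) g"
proof -
  have t: "inj_on t I" "t \<in> I \<rightarrow> I"
    using assms(2) by (auto simp: permutes_inj_on permutes_in_image)
  have "(\<lambda>\<omega>. \<lambda>n\<in>I. \<omega> (t n)) \<in> PiM I (\<lambda>_. M) \<rightarrow>\<^sub>M PiM I (\<lambda>_. M)"
    using t by (intro measurable_restrict measurable_component_singleton) auto
  moreover have "distr (PiM I (\<lambda>_. M)) (PiM I (\<lambda>_. M)) (\<lambda>\<omega>. \<lambda>n\<in>I. \<omega> (t n)) = PiM I (\<lambda>_. M)"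
    using distr_PiM_reindex[of I "\<lambda>_. M" t I] assms(1) t by simp
  ultimately show ?thesis
    by (metis integral_distr assms(3))
qed

lemma borel_measurable_integral_PiM_insert:
  fixes g :: "('i \<Rightarrow> 'a) \<Rightarrow> real"
  assumes M: "prob_space M" and g: "g \<in> borel_measurable (PiM (insert i I) (\<lambda>_. M))"
  shows "(\<lambda>x. \<integral>X. g (X(i := x)) \<partial>PiM I (\<lambda>_. M)) \<in> borel_measurable M"
proof -
  interpret PiM_I: prob_space "PiM I (\<lambda>_. M)"
    by (intro prob_space_PiM M)
  have "(\<lambda>y. (snd y)(i := fst y)) \<in> M \<Otimes>\<^sub>M PiM I (\<lambda>_. M) \<rightarrow>\<^sub>M PiM (insert i I) (\<lambda>_. M)"
    by (rule measurable_fun_upd[where J=I]) simp_all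
  then show ?thesis
    using PiM_I.borel_measurable_lebesgue_integral[where f="\<lambda>x X. g (X(i := x))" and N=M] g
    by (simp add: split_beta')
qed

lemma integral_PiM_insert:
  fixes g :: "('i \<Rightarrow> 'a) \<Rightarrow> real"
  assumes M: "prob_space M" and i: "i \<notin> I" and g: "integrable (PiM (insert i I) (\<lambda>_. M)) g"
  shows "(\<integral>x. \<integral>X. g (X(i := x)) \<partial>PiM I (\<lambda>_. M) \<partial>M) = integral\<^sup>L (PiM (insert i I) (\<lambda>_. M)) g"
proof -
  interpret M: prob_space M
    by (rule M)
  interpret PiM_I: prob_space "PiM I (\<lambda>_. M)"
    by (intro prob_space_PiM M)
  interpret pair_prob_space M "PiM I (\<lambda>_. M)" ..
  let ?U = "\<lambda>y. (snd y)(i := fst y)"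
  have U: "?U \<in> M \<Otimes>\<^sub>M PiM I (\<lambda>_. M) \<rightarrow>\<^sub>M PiM (insert i I) (\<lambda>_. M)"
    by (rule measurable_fun_upd[where J=I]) simp_all
  have distr: "distr (M \<Otimes>\<^sub>M PiM I (\<lambda>_. M)) (PiM (insert i I) (\<lambda>_. M)) ?U = PiM (insert i I) (\<lambda>_. M)"
    using distr_pair_PiM_eq_PiM[of I "\<lambda>_. M" i] M by (simp add: split_beta')
  have gU: "integrable (M \<Otimes>\<^sub>M PiM I (\<lambda>_. M)) (\<lambda>y. g (?U y))"
    using integrable_distr_eq[OF U, of g] g distr by simp
  have "integral\<^sup>L (PiM (insert i I) (\<lambda>_. M)) g = (\<integral>y. g (?U y) \<partial>(M \<Otimes>\<^sub>M PiM I (\<lambda>_. M)))"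
    using integral_distr[OF U, of g] g distr by simp
  also have "\<dots> = (\<integral>x. \<integral>X. g (X(i := x)) \<partial>PiM I (\<lambda>_. M) \<partial>M)"
    using integral_fst'[OF gU] by (simp add: split_beta')
  finally show ?thesis ..
qed

lemma AE_PiM_notin_PiE_D:
  assumes M: "prob_space M" and I: "finite I" "I \<noteq> {}" and A: "A \<in> sets M"
    and AE_notin_PiE: "AE z in PiM I (\<lambda>_. M). z \<notin> PiE I (\<lambda>_. A)"
  shows "AE x in M. x \<notin> A"
proof -
  interpret product_prob_space "\<lambda>_. M" I
    using M by (simp add: product_prob_space_def product_prob_space_axioms_def
        product_sigma_finite_def prob_space_imp_sigma_finite)
  have "PiE I (\<lambda>_. A) \<in> sets (PiM I (\<lambda>_. M))"
    using I(1) A by (intro sets_PiM_I_finite) auto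
  then have "emeasure (PiM I (\<lambda>_. M)) (PiE I (\<lambda>_. A)) = 0"
    using AE_notin_PiE by (metis AE_iff_null_sets null_setsD1)
  moreover have "emeasure (PiM I (\<lambda>_. M)) (PiE I (\<lambda>_. A)) = emeasure M A ^ card I"
    using A I(1) by (simp add: emeasure_PiM)
  ultimately have "emeasure M A = 0"
    using I by simp
  then show ?thesis
    using A by (metis AE_iff_null_sets null_setsI)
qed

lemma AE_PiM_sum_eq_0_iff:
  fixes h :: "'a \<Rightarrow> real"
  assumes M: "prob_space M" and I: "finite I" "I \<noteq> {}" and [measurable]: "h \<in> borel_measurable M"
  shows "(AE z in PiM I (\<lambda>_. M). (\<Sum>i\<in>I. h (z i)) = 0) \<longleftrightarrow> (AE x in M. h x = 0)"
proof
  assume "AE x in M. h x = 0"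
  then have "\<forall>i\<in>I. AE z in PiM I (\<lambda>_. M). h (z i) = 0"
    using M by (auto intro!: AE_PiM_component)
  then have "AE z in PiM I (\<lambda>_. M). \<forall>i\<in>I. h (z i) = 0"
    using I(1) by (rule eventually_ball_finite[rotated])
  then show "AE z in PiM I (\<lambda>_. M). (\<Sum>i\<in>I. h (z i)) = 0"
    by eventually_elim simp
next
  assume sum_eq_0: "AE z in PiM I (\<lambda>_. M). (\<Sum>i\<in>I. h (z i)) = 0"
  have null: "AE x in M. x \<notin> A"
    if "A \<in> sets M" and sum_ne_0: "\<And>z. z \<in> PiE I (\<lambda>_. A) \<Longrightarrow> (\<Sum>i\<in>I. h (z i)) \<noteq> 0" for A
    using M I \<open>A \<in> sets M\<close>
  proof (rule AE_PiM_notin_PiE_D)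
    show "AE z in PiM I (\<lambda>_. M). z \<notin> PiE I (\<lambda>_. A)"
      using sum_eq_0 by eventually_elim (use sum_ne_0 in auto)
  qed
  have "AE x in M. x \<notin> {x \<in> space M. h x > 0}"
  proof (rule null)
    fix z assume "z \<in> PiE I (\<lambda>_. {x \<in> space M. h x > 0})"
    then have "0 < (\<Sum>i\<in>I. h (z i))"
      using I by (intro sum_pos) auto
    then show "(\<Sum>i\<in>I. h (z i)) \<noteq> 0"
      by simp
  qed simp
  moreover have "AE x in M. x \<notin> {x \<in> space M. h x < 0}"
  proof (rule null)
    fix z assume "z \<in> PiE I (\<lambda>_. {x \<in> space M. h x < 0})"
    then have "(\<Sum>i\<in>I. h (z i)) < (\<Sum>i\<in>I. 0)"
      using I by (intro sum_strict_mono) auto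
    then show "(\<Sum>i\<in>I. h (z i)) \<noteq> 0"
      by simp
  qed simp
  ultimately show "AE x in M. h x = 0"
    using AE_space by eventually_elim auto
qed

lemma abs_mult_le_weighted_squares:
  fixes a c s x y :: real
  assumes "0 \<le> a" "a \<le> s" "0 \<le> c" "c \<le> s"
  shows "\<bar>a * x * (c * y)\<bar> \<le> s * (a * x\<^sup>2 + c * y\<^sup>2)"
proof -
  have "2 * \<bar>x * y\<bar> \<le> x\<^sup>2 + y\<^sup>2"
    using zero_le_power2[of "\<bar>x\<bar> - \<bar>y\<bar>"] by (simp add: power2_diff abs_mult)
  then have xy: "\<bar>x * y\<bar> \<le> x\<^sup>2 + y\<^sup>2"
    using abs_ge_zero[of "x * y"] by linarith
  have "\<bar>a * x * (c * y)\<bar> = a * c * \<bar>x * y\<bar>"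
    using assms by (simp add: abs_mult)
  also have "\<dots> \<le> a * c * (x\<^sup>2 + y\<^sup>2)"
    using assms xy by (intro mult_left_mono) auto
  also have "\<dots> = c * (a * x\<^sup>2) + a * (c * y\<^sup>2)"
    by (simp add: algebra_simps)
  also have "\<dots> \<le> s * (a * x\<^sup>2) + s * (c * y\<^sup>2)"
    using assms by (intro add_mono mult_right_mono) auto
  finally show ?thesis
    by (simp add: algebra_simps)
qed

lemma abs_self_normalized_term_le:
  fixes a b :: "'i \<Rightarrow> real"
  assumes I: "finite I" "k \<in> I" and a_nonneg: "\<And>i. i \<in> I \<Longrightarrow> 0 \<le> a i"
  shows "\<bar>a k * b k * (\<Sum>i\<in>I. a i * b i) / (\<Sum>i\<in>I. a i)\<bar> \<le> (\<Sum>i\<in>I. a k * (b k)\<^sup>2 + a i * (b i)\<^sup>2)"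
proof -
  define s where "s = (\<Sum>i\<in>I. a i)"
  have a_le_s: "a i \<le> s" if "i \<in> I" for i
    unfolding s_def using I(1) that a_nonneg by (intro member_le_sum) auto
  show ?thesis
  proof (cases "s = 0")
    case True
    have "0 \<le> (\<Sum>i\<in>I. a k * (b k)\<^sup>2 + a i * (b i)\<^sup>2)"
      using I(2) a_nonneg by (intro sum_nonneg) auto
    then show ?thesis
      using True by (simp add: s_def)
  next
    case False
    moreover have "0 \<le> s"
      unfolding s_def using a_nonneg by (simp add: sum_nonneg)
    ultimately have "0 < s"
      by simp
    have "\<bar>a k * b k * (\<Sum>i\<in>I. a i * b i)\<bar> \<le> (\<Sum>i\<in>I. \<bar>a k * b k * (a i * b i)\<bar>)"
      by (simp add: sum_distrib_left sum_abs)
    also have "\<dots> \<le> (\<Sum>i\<in>I. s * (a k * (b k)\<^sup>2 + a i * (b i)\<^sup>2))"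
      using I(2) a_nonneg a_le_s by (intro sum_mono abs_mult_le_weighted_squares) auto
    finally show ?thesis
      using \<open>0 < s\<close> by (simp add: s_def abs_div pos_divide_le_eq sum_distrib_left[symmetric] mult.commute)
  qed
qed

context
  fixes Q :: "'a measure" and I :: "'i set" and w f :: "'a \<Rightarrow> real"
  assumes Q: "prob_space Q" and finite_I: "finite I"
    and w_measurable[measurable]: "w \<in> borel_measurable Q"
    and f_measurable[measurable]: "f \<in> borel_measurable Q"
    and w_nonneg: "\<And>x. x \<in> space Q \<Longrightarrow> 0 \<le> w x"
    and integrable_w_f2: "integrable Q (\<lambda>x. w x * (f x)\<^sup>2)"
begin

lemma w_PiM_nonneg: "z \<in> space (PiM I (\<lambda>_. Q)) \<Longrightarrow> i \<in> I \<Longrightarrow> 0 \<le> w (z i)"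
  by (auto simp: space_PiM intro: w_nonneg)

lemma integrable_self_normalized_term:
  assumes k: "k \<in> I"
  shows "integrable (PiM I (\<lambda>_. Q))
    (\<lambda>z. w (z k) * f (z k) * (\<Sum>i\<in>I. w (z i) * f (z i)) / (\<Sum>i\<in>I. w (z i)))"
proof (rule Bochner_Integration.integrable_bound)
  show "integrable (PiM I (\<lambda>_. Q)) (\<lambda>z. \<Sum>i\<in>I. w (z k) * (f (z k))\<^sup>2 + w (z i) * (f (z i))\<^sup>2)"
    using Q k integrable_w_f2
    by (intro Bochner_Integration.integrable_sum Bochner_Integration.integrable_add
        integrable_PiM_component[where \<phi> = "\<lambda>x. w x * (f x)\<^sup>2"])
  show "AE z in PiM I (\<lambda>_. Q).
      norm (w (z k) * f (z k) * (\<Sum>i\<in>I. w (z i) * f (z i)) / (\<Sum>i\<in>I. w (z i)))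
        \<le> norm (\<Sum>i\<in>I. w (z k) * (f (z k))\<^sup>2 + w (z i) * (f (z i))\<^sup>2)"
  proof (rule AE_I2)
    fix z assume "z \<in> space (PiM I (\<lambda>_. Q))"
    then show "norm (w (z k) * f (z k) * (\<Sum>i\<in>I. w (z i) * f (z i)) / (\<Sum>i\<in>I. w (z i)))
        \<le> norm (\<Sum>i\<in>I. w (z k) * (f (z k))\<^sup>2 + w (z i) * (f (z i))\<^sup>2)"
      using abs_self_normalized_term_le[OF finite_I k, of "\<lambda>i. w (z i)" "\<lambda>i. f (z i)"] w_PiM_nonneg
      by simp
  qed
qed (use k in measurable)

lemma integral_self_normalized_term_eq:
  assumes j: "j \<in> I" and k: "k \<in> I"
  shows "(\<integral>z. w (z j) * f (z j) * (\<Sum>i\<in>I. w (z i) * f (z i)) / (\<Sum>i\<in>I. w (z i)) \<partial>PiM I (\<lambda>_. Q))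
       = (\<integral>z. w (z k) * f (z k) * (\<Sum>i\<in>I. w (z i) * f (z i)) / (\<Sum>i\<in>I. w (z i)) \<partial>PiM I (\<lambda>_. Q))"
proof -
  define t where "t = Transposition.transpose j k"
  have t: "t permutes I"
    unfolding t_def using j k by (rule permutes_swap_id)
  define F where "F z = w (z k) * f (z k) * (\<Sum>i\<in>I. w (z i) * f (z i)) / (\<Sum>i\<in>I. w (z i))" for z
  have [measurable]: "F \<in> borel_measurable (PiM I (\<lambda>_. Q))"
    unfolding F_def using k by measurable
  have F_permuted: "F (\<lambda>n\<in>I. z (t n))
      = w (z j) * f (z j) * (\<Sum>i\<in>I. w (z i) * f (z i)) / (\<Sum>i\<in>I. w (z i))" for z
  proof -
    have permuted_sum: "(\<Sum>i\<in>I. g ((\<lambda>n\<in>I. z (t n)) i)) = (\<Sum>i\<in>I. g (z i))" for g :: "'a \<Rightarrow> real"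
      using sum.permute[OF t, of "\<lambda>i. g (z i)"] by (simp add: comp_def)
    show ?thesis
      using permuted_sum[of "\<lambda>x. w x * f x"] permuted_sum[of w] k by (simp add: F_def t_def)
  qed
  have "(\<integral>z. w (z j) * f (z j) * (\<Sum>i\<in>I. w (z i) * f (z i)) / (\<Sum>i\<in>I. w (z i)) \<partial>PiM I (\<lambda>_. Q))
      = (\<integral>z. F (\<lambda>n\<in>I. z (t n)) \<partial>PiM I (\<lambda>_. Q))"
    by (simp add: F_permuted)
  also have "\<dots> = integral\<^sup>L (PiM I (\<lambda>_. Q)) F"
    using Q t by (rule integral_PiM_permute) simp
  finally show ?thesis
    by (simp add: F_def[abs_def])
qed

lemma
  assumes k: "k \<in> I"
  shows integrable_self_normalized_square:
      "integrable (PiM I (\<lambda>_. Q)) (\<lambda>z. (\<Sum>i\<in>I. w (z i) * f (z i))\<^sup>2 / (\<Sum>i\<in>I. w (z i)))"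
    and integral_self_normalized_square:
      "(\<integral>z. (\<Sum>i\<in>I. w (z i) * f (z i))\<^sup>2 / (\<Sum>i\<in>I. w (z i)) \<partial>PiM I (\<lambda>_. Q))
       = card I * (\<integral>z. w (z k) * f (z k) * (\<Sum>i\<in>I. w (z i) * f (z i)) / (\<Sum>i\<in>I. w (z i)) \<partial>PiM I (\<lambda>_. Q))"
proof -
  have square_eq_sum: "(\<Sum>i\<in>I. w (z i) * f (z i))\<^sup>2 / (\<Sum>i\<in>I. w (z i))
      = (\<Sum>j\<in>I. w (z j) * f (z j) * (\<Sum>i\<in>I. w (z i) * f (z i)) / (\<Sum>i\<in>I. w (z i)))" for z
    by (simp add: power2_eq_square sum_distrib_right sum_divide_distrib)
  show "integrable (PiM I (\<lambda>_. Q)) (\<lambda>z. (\<Sum>i\<in>I. w (z i) * f (z i))\<^sup>2 / (\<Sum>i\<in>I. w (z i)))"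
    unfolding square_eq_sum by (intro Bochner_Integration.integrable_sum integrable_self_normalized_term)
  show "(\<integral>z. (\<Sum>i\<in>I. w (z i) * f (z i))\<^sup>2 / (\<Sum>i\<in>I. w (z i)) \<partial>PiM I (\<lambda>_. Q))
       = card I * (\<integral>z. w (z k) * f (z k) * (\<Sum>i\<in>I. w (z i) * f (z i)) / (\<Sum>i\<in>I. w (z i)) \<partial>PiM I (\<lambda>_. Q))"
    unfolding square_eq_sum
    by (simp add: Bochner_Integration.integral_sum integrable_self_normalized_term
        integral_self_normalized_term_eq[OF _ k])
qed

lemma integral_self_normalized_square_nonneg:
  "0 \<le> (\<integral>z. (\<Sum>i\<in>I. w (z i) * f (z i))\<^sup>2 / (\<Sum>i\<in>I. w (z i)) \<partial>PiM I (\<lambda>_. Q))"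
  using w_PiM_nonneg by (intro Bochner_Integration.integral_nonneg divide_nonneg_nonneg sum_nonneg) auto

lemma integral_self_normalized_square_eq_0_iff:
  assumes "I \<noteq> {}"
  shows "(\<integral>z. (\<Sum>i\<in>I. w (z i) * f (z i))\<^sup>2 / (\<Sum>i\<in>I. w (z i)) \<partial>PiM I (\<lambda>_. Q)) = 0
     \<longleftrightarrow> (\<integral>x. w x * (f x)\<^sup>2 \<partial>Q) = 0"
proof -
  obtain k where k: "k \<in> I"
    using assms by blast
  have square_eq_0: "(\<Sum>i\<in>I. w (z i) * f (z i))\<^sup>2 / (\<Sum>i\<in>I. w (z i)) = 0
      \<longleftrightarrow> (\<Sum>i\<in>I. w (z i) * f (z i)) = 0" if z: "z \<in> space (PiM I (\<lambda>_. Q))" for z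
    \<comment> \<open>all weights vanish when their sum does\<close>
    using sum_nonneg_eq_0_iff[OF finite_I, of "\<lambda>i. w (z i)"] w_PiM_nonneg[OF z] by auto
  have "(\<integral>z. (\<Sum>i\<in>I. w (z i) * f (z i))\<^sup>2 / (\<Sum>i\<in>I. w (z i)) \<partial>PiM I (\<lambda>_. Q)) = 0
      \<longleftrightarrow> (AE z in PiM I (\<lambda>_. Q). (\<Sum>i\<in>I. w (z i) * f (z i))\<^sup>2 / (\<Sum>i\<in>I. w (z i)) = 0)"
    using integrable_self_normalized_square[OF k] w_PiM_nonneg
    by (intro integral_nonneg_eq_0_iff_AE) (auto intro!: AE_I2 divide_nonneg_nonneg sum_nonneg)
  also have "\<dots> \<longleftrightarrow> (AE z in PiM I (\<lambda>_. Q). (\<Sum>i\<in>I. w (z i) * f (z i)) = 0)"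
    using square_eq_0 by (intro AE_cong) auto
  also have "\<dots> \<longleftrightarrow> (AE x in Q. w x * f x = 0)"
    using Q finite_I assms by (rule AE_PiM_sum_eq_0_iff) simp
  also have "\<dots> \<longleftrightarrow> (AE x in Q. w x * (f x)\<^sup>2 = 0)"
    by (intro AE_cong) (simp add: power2_eq_square)
  also have "\<dots> \<longleftrightarrow> (\<integral>x. w x * (f x)\<^sup>2 \<partial>Q) = 0"
    using integrable_w_f2 w_nonneg by (intro integral_nonneg_eq_0_iff_AE[symmetric]) (auto intro!: AE_I2)
  finally show ?thesis .
qed

end

lemma PN_eq_integral_fun_upd:
  assumes "2 \<le> N"
  shows "PN M p q N f = (\<lambda>x. \<integral>X. (\<Sum>i<N. wt p q ((X(0 := x)) i) / (\<Sum>j<N. wt p q ((X(0 := x)) j))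
            * f ((X(0 := x)) i)) \<partial>PiM {1..<N} (\<lambda>_. density M q))"
  using assms by (simp add: PN_def Let_def fun_eq_iff)

locale importance_sampling =
  fixes M :: "'a measure" and p q :: "'a \<Rightarrow> real"
  assumes p_measurable[measurable]: "p \<in> borel_measurable M"
    and p_nonneg: "\<And>x. x \<in> space M \<Longrightarrow> 0 \<le> p x"
    and q_measurable[measurable]: "q \<in> borel_measurable M"
    and q_nonneg: "\<And>x. x \<in> space M \<Longrightarrow> 0 \<le> q x"
    and q_normalized: "(\<integral>\<^sup>+ x. ennreal (q x) \<partial>M) = 1"
    and q_pos: "\<And>x. x \<in> space M \<Longrightarrow> 0 < p x \<Longrightarrow> 0 < q x"
begin

lemma prob_space_proposal: "prob_space (density M q)"
  using q_measurable q_normalized by (rule prob_space_density)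

lemma wt_nonneg: "x \<in> space M \<Longrightarrow> 0 \<le> wt p q x"
  using p_nonneg q_nonneg by (simp add: wt_def)

lemma density_eq_density_wt: "density M p = density (density M q) (wt p q)"
proof -
  have "density (density M q) (wt p q) = density M (\<lambda>x. ennreal (q x) * ennreal (wt p q x))"
    by (rule density_density_eq) simp_all
  also have "\<dots> = density M p"
  proof (intro density_cong AE_I2)
    fix x assume "x \<in> space M"
    then have "p x = q x * wt p q x" "0 \<le> wt p q x"
      using p_nonneg q_nonneg q_pos by (force simp: wt_def)+
    then show "ennreal (q x) * ennreal (wt p q x) = ennreal (p x)"
      by (simp add: ennreal_mult'')
  qed simp_all
  finally show ?thesis ..
qed

lemma
  assumes [measurable]: "\<phi> \<in> borel_measurable M"
  shows integrable_density_wt_iff: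
      "integrable (density M p) \<phi> \<longleftrightarrow> integrable (density M q) (\<lambda>x. wt p q x * \<phi> x)"
    and integral_density_wt:
      "integral\<^sup>L (density M p) \<phi> = (\<integral>x. wt p q x * \<phi> x \<partial>density M q)"
  unfolding density_eq_density_wt using wt_nonneg
  by (subst integrable_density integral_density; auto intro!: AE_I2)+

lemma borel_measurable_PN:
  assumes [measurable]: "f \<in> borel_measurable M"
  shows "PN M p q N f \<in> borel_measurable M"
proof (cases "2 \<le> N")
  case True
  then have N: "insert 0 {1..<N} = {..<N}"
    by auto
  have "(\<lambda>z. \<Sum>i<N. wt p q (z i) / (\<Sum>j<N. wt p q (z j)) * f (z i))
      \<in> borel_measurable (PiM (insert 0 {1..<N}) (\<lambda>_. density M q))"
    unfolding N by measurable
  from borel_measurable_integral_PiM_insert[OF prob_space_proposal this] show ?thesis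
    using True by (simp add: PN_eq_integral_fun_upd)
next
  case False
  then show ?thesis
    by (cases "N = 1") (simp_all add: PN_def[abs_def])
qed

lemma integral_first_self_normalized_term_eq_PN:
  fixes f :: "'a \<Rightarrow> real"
  assumes [measurable]: "f \<in> borel_measurable M" and N: "1 \<le> N"
    and integrable: "integrable (PiM {..<N} (\<lambda>_. density M q))
      (\<lambda>z. wt p q (z 0) * f (z 0) * (\<Sum>i<N. wt p q (z i) * f (z i)) / (\<Sum>i<N. wt p q (z i)))"
  shows "(\<integral>z. wt p q (z 0) * f (z 0) * (\<Sum>i<N. wt p q (z i) * f (z i)) / (\<Sum>i<N. wt p q (z i))
        \<partial>PiM {..<N} (\<lambda>_. density M q))
    = (\<integral>x. wt p q x * f x * PN M p q N f x \<partial>density M q)"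
proof (cases "N = 1")
  case True
  have "(\<integral>z. wt p q (z 0) * f (z 0) * (\<Sum>i<N. wt p q (z i) * f (z i)) / (\<Sum>i<N. wt p q (z i))
        \<partial>PiM {..<N} (\<lambda>_. density M q))
      = (\<integral>z. (\<lambda>x. wt p q x * f x * (wt p q x * f x) / wt p q x) (z 0) \<partial>PiM {..<N} (\<lambda>_. density M q))"
    using True by simp
  also have "\<dots> = (\<integral>x. wt p q x * f x * (wt p q x * f x) / wt p q x \<partial>density M q)"
    using prob_space_proposal N by (intro integral_PiM_component) auto
  also have "\<dots> = (\<integral>x. wt p q x * f x * PN M p q N f x \<partial>density M q)"
    using True by (intro Bochner_Integration.integral_cong) (auto simp: PN_def)
  finally show ?thesis .
next
  case False
  then have "2 \<le> N" and N_eq: "insert 0 {1..<N} = {..<N}"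
    using N by auto
  have "0 \<notin> {1..<N}"
    by simp
  from integral_PiM_insert[OF prob_space_proposal this integrable[folded N_eq]]
  have "(\<integral>z. wt p q (z 0) * f (z 0) * (\<Sum>i<N. wt p q (z i) * f (z i)) / (\<Sum>i<N. wt p q (z i))
        \<partial>PiM {..<N} (\<lambda>_. density M q))
      = (\<integral>x. \<integral>X. wt p q ((X(0 := x)) 0) * f ((X(0 := x)) 0)
            * (\<Sum>i<N. wt p q ((X(0 := x)) i) * f ((X(0 := x)) i)) / (\<Sum>i<N. wt p q ((X(0 := x)) i))
          \<partial>PiM {1..<N} (\<lambda>_. density M q) \<partial>density M q)"
    unfolding N_eq by (rule sym)
  also have "\<dots> = (\<integral>x. wt p q x * f x * PN M p q N f x \<partial>density M q)"
  proof (rule Bochner_Integration.integral_cong[OF refl])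
    fix x
    have "wt p q ((X(0 := x)) 0) * f ((X(0 := x)) 0)
          * (\<Sum>i<N. wt p q ((X(0 := x)) i) * f ((X(0 := x)) i)) / (\<Sum>i<N. wt p q ((X(0 := x)) i))
        = wt p q x * f x
          * (\<Sum>i<N. wt p q ((X(0 := x)) i) / (\<Sum>j<N. wt p q ((X(0 := x)) j)) * f ((X(0 := x)) i))"
      for X :: "nat \<Rightarrow> 'a"
      by (simp add: sum_divide_distrib[symmetric])
    then show "(\<integral>X. wt p q ((X(0 := x)) 0) * f ((X(0 := x)) 0)
            * (\<Sum>i<N. wt p q ((X(0 := x)) i) * f ((X(0 := x)) i)) / (\<Sum>i<N. wt p q ((X(0 := x)) i))
          \<partial>PiM {1..<N} (\<lambda>_. density M q))
        = wt p q x * f x * PN M p q N f x"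
      by (simp only: PN_eq_integral_fun_upd[OF \<open>2 \<le> N\<close>] integral_mult_right_zero)
  qed
  finally show ?thesis .
qed

lemma integral_indicator_WN:
  "(\<integral>z. indicator (WN M p q N) z * ((\<Sum>i<N. wt p q (z i) * f (z i))\<^sup>2 / (\<Sum>j<N. wt p q (z j)))
      \<partial>PiM {..<N} (\<lambda>_. density M q))
    = (\<integral>z. (\<Sum>i<N. wt p q (z i) * f (z i))\<^sup>2 / (\<Sum>i<N. wt p q (z i)) \<partial>PiM {..<N} (\<lambda>_. density M q))"
proof (intro Bochner_Integration.integral_cong refl)
  fix z assume z: "z \<in> space (PiM {..<N} (\<lambda>_. density M q))"
  show "indicator (WN M p q N) z * ((\<Sum>i<N. wt p q (z i) * f (z i))\<^sup>2 / (\<Sum>j<N. wt p q (z j)))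
      = (\<Sum>i<N. wt p q (z i) * f (z i))\<^sup>2 / (\<Sum>i<N. wt p q (z i))"
  proof (cases "0 < (\<Sum>j<N. wt p q (z j))")
    case True
    then have "z \<in> WN M p q N"
      using z by (simp add: WN_def space_PiM)
    then show ?thesis
      by simp
  next
    case False
    have "0 \<le> (\<Sum>j<N. wt p q (z j))"
      using z by (auto simp: space_PiM intro!: sum_nonneg wt_nonneg)
    then show ?thesis
      using False by simp
  qed
qed

lemma
  assumes N: "1 \<le> N" and [measurable]: "f \<in> borel_measurable M"
    and integrable_f2: "integrable (density M p) (\<lambda>x. (f x)\<^sup>2)"
  shows inner_pi_PN_eq: "inner_pi M p f (PN M p q N f)
      = (\<integral>z. (\<Sum>i<N. wt p q (z i) * f (z i))\<^sup>2 / (\<Sum>i<N. wt p q (z i)) \<partial>PiM {..<N} (\<lambda>_. density M q)) / N"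
    and inner_pi_PN_nonneg: "0 \<le> inner_pi M p f (PN M p q N f)"
    and inner_pi_PN_eq_0_iff: "inner_pi M p f (PN M p q N f) = 0 \<longleftrightarrow> inner_pi M p f f = 0"
proof -
  have "wt p q \<in> borel_measurable (density M q)" "f \<in> borel_measurable (density M q)"
    and "\<And>x. x \<in> space (density M q) \<Longrightarrow> 0 \<le> wt p q x"
    and "integrable (density M q) (\<lambda>x. wt p q x * (f x)\<^sup>2)"
    using wt_nonneg integrable_f2 by (simp_all add: integrable_density_wt_iff)
  note self_normalized = prob_space_proposal finite_lessThan[of N] this
  have "0 \<in> {..<N}"
    using N by simp
  then have nonempty: "{..<N} \<noteq> {}"
    by blast
  define J where "J = (\<integral>z. (\<Sum>i<N. wt p q (z i) * f (z i))\<^sup>2 / (\<Sum>i<N. wt p q (z i))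
    \<partial>PiM {..<N} (\<lambda>_. density M q))"
  have "J = N * (\<integral>z. wt p q (z 0) * f (z 0) * (\<Sum>i<N. wt p q (z i) * f (z i)) / (\<Sum>i<N. wt p q (z i))
      \<partial>PiM {..<N} (\<lambda>_. density M q))"
    unfolding J_def using integral_self_normalized_square[OF self_normalized \<open>0 \<in> {..<N}\<close>] by simp
  also have "\<dots> = N * (\<integral>x. wt p q x * f x * PN M p q N f x \<partial>density M q)"
    using integral_first_self_normalized_term_eq_PN[OF _ N]
      integrable_self_normalized_term[OF self_normalized \<open>0 \<in> {..<N}\<close>]
    by simp
  also have "\<dots> = N * inner_pi M p f (PN M p q N f)"
    using borel_measurable_PN by (simp add: inner_pi_def integral_density_wt mult.assoc)
  finally show inner_pi_PN: "inner_pi M p f (PN M p q N f) = J / N"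
    using N by simp
  have "0 \<le> J"
    unfolding J_def by (rule integral_self_normalized_square_nonneg[OF self_normalized])
  then show "0 \<le> inner_pi M p f (PN M p q N f)"
    unfolding inner_pi_PN by simp
  have "J = 0 \<longleftrightarrow> inner_pi M p f f = 0"
    unfolding J_def using integral_self_normalized_square_eq_0_iff[OF self_normalized nonempty]
    by (simp add: inner_pi_def integral_density_wt power2_eq_square)
  then show "inner_pi M p f (PN M p q N f) = 0 \<longleftrightarrow> inner_pi M p f f = 0"
    unfolding inner_pi_PN using N by simp
qed

end

theorem lemma6p4:
  fixes M :: "'a measure" and p q f :: "'a \<Rightarrow> real" and N :: nat
  assumes "sigma_finite_measure M"
    and "p \<in> borel_measurable M" and "\<And>x. x \<in> space M \<Longrightarrow> p x \<ge> 0"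
    and "(\<integral>\<^sup>+ x. ennreal (p x) \<partial>M) = 1"
    and "q \<in> borel_measurable M" and "\<And>x. x \<in> space M \<Longrightarrow> q x \<ge> 0"
    and "(\<integral>\<^sup>+ x. ennreal (q x) \<partial>M) = 1"
    and "\<And>x. x \<in> space M \<Longrightarrow> p x > 0 \<Longrightarrow> q x > 0"
    and "N \<ge> 1"
    and "f \<in> borel_measurable M" and "integrable (density M p) (\<lambda>x. (f x)\<^sup>2)"
  shows "(inner_pi M p f (PN M p q N f) =
           (1 / real N) * (\<integral>z. indicator (WN M p q N) z *
              ((\<Sum>i<N. wt p q (z i) * f (z i))\<^sup>2 / (\<Sum>j<N. wt p q (z j)))
            \<partial>PiM {..<N} (\<lambda>_. density M q)))
         \<and> inner_pi M p f (PN M p q N f) \<ge> 0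
         \<and> (inner_pi M p f (PN M p q N f) = 0 \<longleftrightarrow> inner_pi M p f f = 0)"
proof -
  interpret importance_sampling M p q
    using assms(2,3,5,6,7,8) by (rule importance_sampling.intro)
  show ?thesis
    unfolding integral_indicator_WN
    using inner_pi_PN_eq[OF assms(9-11)] inner_pi_PN_nonneg[OF assms(9-11)]
      inner_pi_PN_eq_0_iff[OF assms(9-11)]
    by simp
qed

end
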